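(* Let $\mu>0$ and $b>0$. Let $Z_1,Z_2,\dots$ be independent Normal random variables with mean $\mu$ and variance $1$, let $S_m=\sum_{i=1}^m Z_i$, and let $\tau=\min\{m: S_m<-b \text{ or } S_m>b\}$. Let $\Phi$ be the standard Normal distribution function and $R(a)=\frac{\Phi(a)}{1-\Phi(a)}$. Then $$R(-\mu)\,e^{-2\mu b}<\mathbb{E}[e^{-2\mu S_\tau}\mid S_\tau>b]<e^{-2\mu b},$$ $$e^{2\mu b}<\mathbb{E}[e^{-2\mu S_\tau}\mid S_\tau<-b]<e^{2\mu b}R(\mu).$$ *)

theory Defs
  imports "HOL-Probability.Probability"
begin

definition Phi :: "real \<Rightarrow> real" where
  "Phi a = cdf (density lborel std_normal_density) a"

definition Rratio :: "real \<Rightarrow> real" where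
  "Rratio a = Phi a / (1 - Phi a)"

definition psum :: "(nat \<Rightarrow> 'a \<Rightarrow> real) \<Rightarrow> nat \<Rightarrow> 'a \<Rightarrow> real" where
  "psum Z m \<omega> = (\<Sum>i\<in>{1..m}. Z i \<omega>)"

text \<open>Exit time tau = min{m >= 1 : S_m < -b or S_m > b} (meaningful when the set is nonempty).\<close>
definition exit_time :: "(nat \<Rightarrow> 'a \<Rightarrow> real) \<Rightarrow> real \<Rightarrow> 'a \<Rightarrow> nat" where
  "exit_time Z b \<omega> = (LEAST m. 1 \<le> m \<and> (psum Z m \<omega> < - b \<or> psum Z m \<omega> > b))"

definition exits :: "(nat \<Rightarrow> 'a \<Rightarrow> real) \<Rightarrow> real \<Rightarrow> 'a \<Rightarrow> bool" where
  "exits Z b \<omega> \<longleftrightarrow> (\<exists>m\<ge>1. psum Z m \<omega> < - b \<or> psum Z m \<omega> > b)"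

definition stopped_sum :: "(nat \<Rightarrow> 'a \<Rightarrow> real) \<Rightarrow> real \<Rightarrow> 'a \<Rightarrow> real" where
  "stopped_sum Z b \<omega> = psum Z (exit_time Z b \<omega>) \<omega>"

definition cond_exp_event :: "'a measure \<Rightarrow> ('a \<Rightarrow> real) \<Rightarrow> 'a set \<Rightarrow> real" where
  "cond_exp_event M X A = (\<integral>\<omega>. indicator A \<omega> * X \<omega> \<partial>M) / measure M A"

end

theory Submission
  imports Defs
begin

(*
  Split the event S_tau > b according to the value n of tau.  Once Z_1, ..., Z_(n-1) are fixed,
  keeping the walk inside [-b, b] and bringing it to s, the n-th term compares, for the last step
  Y ~ N(mu, 1), the mean of e^(-2 mu (s + Y)) on {s + Y > b} with P(s + Y > b).  Their ratio is
  e^(-2 mu b) E[e^(-2 mu (Y - c)) | Y > c] with c = b - s >= 0.  This conditional expectation is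
  below 1 because the overshoot Y - c is positive, and it increases with c by Chebyshev's integral
  inequality (shifting by c multiplies the density of the overshoot by a decreasing exponential),
  so it is at least its value R(-mu) at c = 0.  For n = 1 we have s = 0 < b and both comparisons
  are strict; summing over n gives the bounds for the upper exit.  The lower exit of S is the upper
  exit of the reflected walk -S, whose drift -mu < 0 reverses all the inequalities.
*)

section \<open>Random walks leaving a band\<close>

definition seq_sum :: "(nat \<Rightarrow> real) \<Rightarrow> nat \<Rightarrow> real" where
  "seq_sum x k = (\<Sum>i\<in>{1..k}. x i)"

definition within_band :: "real \<Rightarrow> (nat \<Rightarrow> real) \<Rightarrow> nat \<Rightarrow> bool" where
  "within_band b x k \<longleftrightarrow> (\<forall>j\<in>{1..k}. \<bar>seq_sum x j\<bar> \<le> b)"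

definition exits_above_at :: "real \<Rightarrow> (nat \<Rightarrow> real) \<Rightarrow> nat \<Rightarrow> bool" where
  "exits_above_at b x n \<longleftrightarrow> 1 \<le> n \<and> within_band b x (n - 1) \<and> b < seq_sum x n"

definition exit_above_gain :: "real \<Rightarrow> (real \<Rightarrow> real) \<Rightarrow> nat \<Rightarrow> (nat \<Rightarrow> real) \<Rightarrow> ennreal" where
  "exit_above_gain b g n x = (if exits_above_at b x n then ennreal (g (seq_sum x n)) else 0)"

lemma psum_eq_seq_sum: "psum Z k \<omega> = seq_sum (\<lambda>i. Z i \<omega>) k"
  unfolding psum_def seq_sum_def ..

lemma exit_time_eq_if_exits_above_at:
  assumes n: "exits_above_at b (\<lambda>i. Z i \<omega>) n"
  shows "exits Z b \<omega> \<and> exit_time Z b \<omega> = n \<and> b < stopped_sum Z b \<omega>"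
proof -
  define P where "P m \<longleftrightarrow> 1 \<le> m \<and> (psum Z m \<omega> < - b \<or> psum Z m \<omega> > b)" for m
  have "P n"
    using n by (auto simp: P_def exits_above_at_def psum_eq_seq_sum)
  moreover have "n \<le> m" if "P m" for m
  proof (rule ccontr)
    assume "\<not> n \<le> m"
    with that have "m \<in> {1..n - 1}"
      by (simp add: P_def)
    with n have "\<bar>psum Z m \<omega>\<bar> \<le> b"
      by (simp add: exits_above_at_def within_band_def psum_eq_seq_sum)
    with that show False
      by (auto simp: P_def)
  qed
  ultimately have "exit_time Z b \<omega> = n"
    unfolding exit_time_def P_def[symmetric] by (rule Least_equality)
  with \<open>P n\<close> n show ?thesis
    by (auto simp: exits_def P_def exits_above_at_def stopped_sum_def psum_eq_seq_sum)
qed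

lemma exits_above_at_exit_time:
  assumes "exits Z b \<omega>" and "b < stopped_sum Z b \<omega>"
  shows "exits_above_at b (\<lambda>i. Z i \<omega>) (exit_time Z b \<omega>)"
proof -
  define P where "P m \<longleftrightarrow> 1 \<le> m \<and> (psum Z m \<omega> < - b \<or> psum Z m \<omega> > b)" for m
  have exit_time: "exit_time Z b \<omega> = (LEAST m. P m)"
    by (simp add: P_def exit_time_def)
  have "\<exists>m. P m"
    using assms(1) by (auto simp: exits_def P_def)
  then have "P (exit_time Z b \<omega>)"
    unfolding exit_time by (rule LeastI_ex)
  have before_exit: "\<not> P j" if "j < exit_time Z b \<omega>" for j
    using not_less_Least[of j P] that by (simp add: exit_time)
  have "within_band b (\<lambda>i. Z i \<omega>) (exit_time Z b \<omega> - 1)"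
    unfolding within_band_def
  proof
    fix j assume j: "j \<in> {1..exit_time Z b \<omega> - 1}"
    then have "\<not> P j"
      by (intro before_exit) auto
    with j show "\<bar>seq_sum (\<lambda>i. Z i \<omega>) j\<bar> \<le> b"
      by (auto simp: P_def psum_eq_seq_sum)
  qed
  with \<open>P (exit_time Z b \<omega>)\<close> show ?thesis
    using assms(2) by (simp add: exits_above_at_def P_def stopped_sum_def psum_eq_seq_sum)
qed

lemma exits_above_at_iff:
  "exits_above_at b (\<lambda>i. Z i \<omega>) n \<longleftrightarrow>
    exits Z b \<omega> \<and> exit_time Z b \<omega> = n \<and> b < stopped_sum Z b \<omega>"
  using exit_time_eq_if_exits_above_at exits_above_at_exit_time by metis

lemma suminf_exit_above_gain:
  "(\<Sum>n. exit_above_gain b g n (\<lambda>i. Z i \<omega>)) =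
    (if exits Z b \<omega> \<and> b < stopped_sum Z b \<omega> then ennreal (g (stopped_sum Z b \<omega>)) else 0)"
proof -
  have "exit_above_gain b g n (\<lambda>i. Z i \<omega>) =
      (if n = exit_time Z b \<omega> then
        (if exits Z b \<omega> \<and> b < stopped_sum Z b \<omega> then ennreal (g (stopped_sum Z b \<omega>)) else 0)
       else 0)" for n
    by (auto simp: exit_above_gain_def exits_above_at_iff stopped_sum_def psum_eq_seq_sum)
  then show ?thesis
    by (subst suminf_finite[of "{exit_time Z b \<omega>}"]) auto
qed

lemma abs_seq_sum_le_if_within_band:
  assumes "0 \<le> b" and "within_band b x k"
  shows "\<bar>seq_sum x k\<bar> \<le> b"
  using assms by (cases "k = 0") (auto simp: within_band_def seq_sum_def)

lemma psum_uminus: "psum (\<lambda>i \<omega>. - Z i \<omega>) m \<omega> = - psum Z m \<omega>"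
  by (simp add: psum_def sum_negf)

lemma exits_uminus: "exits (\<lambda>i \<omega>. - Z i \<omega>) b \<omega> = exits Z b \<omega>"
  unfolding exits_def psum_uminus by auto

lemma stopped_sum_uminus: "stopped_sum (\<lambda>i \<omega>. - Z i \<omega>) b \<omega> = - stopped_sum Z b \<omega>"
proof -
  have "exit_time (\<lambda>i \<omega>. - Z i \<omega>) b \<omega> = exit_time Z b \<omega>"
    unfolding exit_time_def psum_uminus by (metis minus_less_iff neg_less_iff_less)
  then show ?thesis
    by (simp add: stopped_sum_def psum_uminus)
qed

lemma seq_sum_restrict: "k \<le> n \<Longrightarrow> seq_sum (restrict x {1..n}) k = seq_sum x k"
  unfolding seq_sum_def by (intro sum.cong) auto

lemma exits_above_at_restrict:
  "exits_above_at b (restrict x {1..n}) n = exits_above_at b x n"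
proof -
  have "seq_sum (restrict x {1..n}) j = seq_sum x j" if "j \<in> {1..n - 1}" for j
    using that by (intro seq_sum_restrict) auto
  then have "within_band b (restrict x {1..n}) (n - 1) = within_band b x (n - 1)"
    by (simp add: within_band_def)
  then show ?thesis
    using seq_sum_restrict[of n n x] by (simp add: exits_above_at_def)
qed

lemma exit_above_gain_restrict:
  "exit_above_gain b g n (restrict x {1..n}) = exit_above_gain b g n x"
  using seq_sum_restrict[of n n x] exits_above_at_restrict[of b x n]
  by (simp add: exit_above_gain_def)

lemma seq_sum_fun_upd: "1 \<le> n \<Longrightarrow> seq_sum (x(n := y)) n = seq_sum x (n - 1) + y"
  and seq_sum_fun_upd_less: "k < n \<Longrightarrow> seq_sum (x(n := y)) k = seq_sum x k"
proof -
  show "k < n \<Longrightarrow> seq_sum (x(n := y)) k = seq_sum x k"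
    unfolding seq_sum_def by (intro sum.cong) auto
  assume "1 \<le> n"
  then have "{1..n} = insert n {1..n - 1}"
    by auto
  then have "seq_sum (x(n := y)) n = y + seq_sum (x(n := y)) (n - 1)"
    unfolding seq_sum_def by (simp only:) (subst sum.insert; auto)
  also have "seq_sum (x(n := y)) (n - 1) = seq_sum x (n - 1)"
    unfolding seq_sum_def by (intro sum.cong) auto
  finally show "seq_sum (x(n := y)) n = seq_sum x (n - 1) + y"
    by linarith
qed

lemma exit_above_gain_fun_upd:
  assumes "1 \<le> n"
  shows "exit_above_gain b g n (x(n := y)) =
    (if within_band b x (n - 1)
     then indicator {b<..} (seq_sum x (n - 1) + y) * ennreal (g (seq_sum x (n - 1) + y))
     else 0)"
proof -
  have "seq_sum (x(n := y)) j = seq_sum x j" if "j \<in> {1..n - 1}" for j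
    using that by (intro seq_sum_fun_upd_less) auto
  then have "within_band b (x(n := y)) (n - 1) = within_band b x (n - 1)"
    by (simp add: within_band_def)
  then show ?thesis
    using assms by (simp add: exit_above_gain_def exits_above_at_def seq_sum_fun_upd indicator_def)
qed

lemma measurable_seq_sum_PiM[measurable]:
  "k \<le> n \<Longrightarrow> (\<lambda>x. seq_sum x k) \<in> borel_measurable (PiM {1..n} (\<lambda>_. borel))"
  unfolding seq_sum_def
  by (intro borel_measurable_sum) (auto intro!: measurable_component_singleton)

lemma measurable_within_band_PiM[measurable]:
  assumes "k \<le> n"
  shows "Measurable.pred (PiM {1..n} (\<lambda>_. borel)) (\<lambda>x. within_band b x k)"
  unfolding within_band_def
proof (intro pred_intros_finite)
  fix j assume "j \<in> {1..k}"
  with assms have [measurable]: "(\<lambda>x. seq_sum x j) \<in> borel_measurable (PiM {1..n} (\<lambda>_. borel))"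
    by (intro measurable_seq_sum_PiM) auto
  show "Measurable.pred (PiM {1..n} (\<lambda>_. borel)) (\<lambda>x. \<bar>seq_sum x j\<bar> \<le> b)"
    by measurable
qed simp

lemma measurable_exits_above_at_PiM[measurable]:
  "Measurable.pred (PiM {1..n} (\<lambda>_. borel)) (\<lambda>x. exits_above_at b x n)"
  unfolding exits_above_at_def by measurable

lemma measurable_exit_above_gain_PiM[measurable]:
  assumes [measurable]: "g \<in> borel_measurable borel"
  shows "exit_above_gain b g n \<in> borel_measurable (PiM {1..n} (\<lambda>_. borel))"
  unfolding exit_above_gain_def by measurable

lemma suminf_less_suminf_ennreal:
  fixes f g :: "nat \<Rightarrow> ennreal"
  assumes le: "\<And>n. f n \<le> g n" and less: "f k < g k" and finite: "suminf f < \<infinity>"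
  shows "suminf f < suminf g"
proof -
  have "suminf g = (\<Sum>n. f n + (g n - f n))"
    using le by (simp add: add_diff_inverse_ennreal)
  also have "\<dots> = suminf f + (\<Sum>n. g n - f n)"
    by (rule suminf_add[symmetric]) auto
  finally have split: "suminf g = suminf f + (\<Sum>n. g n - f n)" .
  have "0 < g k - f k"
    using less by (rule diff_gr0_ennreal)
  also have "g k - f k \<le> (\<Sum>n. g n - f n)"
    using sum_le_suminf[of "\<lambda>n. g n - f n" "{k}"] by auto
  finally have "0 < (\<Sum>n. g n - f n)" .
  with split show ?thesis
    using finite by (simp add: ennreal_add_left_cancel_less[of _ 0, simplified])
qed

lemma ennreal_suminf_ratio_bounds:
  fixes a p :: "nat \<Rightarrow> ennreal" and c d :: real
  assumes "0 \<le> c"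
    and lower: "\<And>n. ennreal c * p n \<le> a n" "ennreal c * p k < a k"
    and upper: "\<And>n. a n \<le> ennreal d * p n" "a k < ennreal d * p k"
    and finite: "suminf p < \<infinity>"
  shows "c < enn2real (suminf a) / enn2real (suminf p)
    \<and> enn2real (suminf a) / enn2real (suminf p) < d"
proof -
  have "(\<Sum>n. ennreal c * p n) < suminf a"
    using finite lower by (intro suminf_less_suminf_ennreal) (auto simp: ennreal_mult_less_top)
  then have lo: "ennreal c * suminf p < suminf a"
    by simp
  have "suminf a \<le> ennreal d * suminf p"
    using upper(1) by (simp flip: ennreal_suminf_cmult add: suminf_le)
  then have "suminf a < \<infinity>"
    using finite by (simp add: ennreal_mult_less_top le_less_trans)
  then have "suminf a < (\<Sum>n. ennreal d * p n)"
    using upper by (intro suminf_less_suminf_ennreal) auto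
  then have hi: "suminf a < ennreal d * suminf p"
    by simp
  obtain P where P: "suminf p = ennreal P" "0 \<le> P"
    using finite by (cases "suminf p") auto
  obtain A where A: "suminf a = ennreal A" "0 \<le> A"
    using \<open>suminf a < \<infinity>\<close> by (cases "suminf a") auto
  have "c * P < A" "A < d * P"
    using lo hi P A \<open>0 \<le> c\<close> by (auto simp: ennreal_mult''[symmetric] ennreal_less_iff)
  moreover have "0 < P"
    using \<open>A < d * P\<close> \<open>c * P < A\<close> P(2) A(2) by (cases "P = 0") auto
  ultimately show ?thesis
    using P A by (simp add: field_simps)
qed

section \<open>Conditional exit expectations for i.i.d. steps\<close>

definition exit_above_step :: "real measure \<Rightarrow> real \<Rightarrow> (real \<Rightarrow> real) \<Rightarrow> real \<Rightarrow> ennreal" where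
  "exit_above_step N b g s = (\<integral>\<^sup>+y. indicator {b<..} (s + y) * ennreal (g (s + y)) \<partial>N)"

locale iid_sequence = prob_space M for M :: "'a measure" +
  fixes Z :: "nat \<Rightarrow> 'a \<Rightarrow> real" and N :: "real measure"
  assumes indep: "indep_vars (\<lambda>_. borel) Z {1..}"
    and distr_Z: "\<And>i. 1 \<le> i \<Longrightarrow> distr M borel (Z i) = N"
begin

lemma measurable_Z: "1 \<le> i \<Longrightarrow> Z i \<in> borel_measurable M"
  using indep by (simp add: indep_vars_def)

lemma prob_space_N: "prob_space N"
  using prob_space_distr[OF measurable_Z[of 1]] distr_Z[of 1] by simp

lemma sets_N: "sets N = sets borel"
proof -
  have "N = distr M borel (Z 1)"
    using distr_Z[of 1] by simp
  then show ?thesis by simp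
qed

lemma distr_restrict_Z:
  assumes "1 \<le> n"
  shows "distr M (PiM {1..n} (\<lambda>_. borel)) (\<lambda>\<omega>. \<lambda>i\<in>{1..n}. Z i \<omega>) = PiM {1..n} (\<lambda>_. N)"
proof -
  have "indep_vars (\<lambda>_. borel) Z {1..n}"
    by (rule indep_vars_subset[OF indep]) auto
  then have "distr M (PiM {1..n} (\<lambda>_. borel)) (\<lambda>\<omega>. \<lambda>i\<in>{1..n}. Z i \<omega>)
      = PiM {1..n} (\<lambda>i. distr M borel (Z i))"
    using assms by (subst (asm) indep_vars_iff_distr_eq_PiM') (auto intro: measurable_Z)
  also have "\<dots> = PiM {1..n} (\<lambda>_. N)"
    by (rule PiM_cong) (auto simp: distr_Z)
  finally show ?thesis .
qed

lemma measurable_restrict_Z: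
  "(\<lambda>\<omega>. \<lambda>i\<in>{1..n}. Z i \<omega>) \<in> measurable M (PiM {1..n} (\<lambda>_. borel))"
  by (rule measurable_restrict) (auto intro: measurable_Z)

lemma measurable_exits_above_at_Z[measurable]:
  "Measurable.pred M (\<lambda>\<omega>. exits_above_at b (\<lambda>i. Z i \<omega>) n)"
  using measurable_comp[OF measurable_restrict_Z measurable_exits_above_at_PiM[where b=b and n=n]]
  unfolding comp_def exits_above_at_restrict .

lemma measurable_exit_above_gain_Z[measurable]:
  assumes "g \<in> borel_measurable borel"
  shows "(\<lambda>\<omega>. exit_above_gain b g n (\<lambda>i. Z i \<omega>)) \<in> borel_measurable M"
  using measurable_comp[OF measurable_restrict_Z
      measurable_exit_above_gain_PiM[OF assms, where b=b and n=n]]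
  unfolding comp_def exit_above_gain_restrict .

lemma measurable_exit_above_step[measurable]:
  assumes [measurable]: "g \<in> borel_measurable borel"
  shows "exit_above_step N b g \<in> borel_measurable borel"
proof -
  interpret N: prob_space N by (rule prob_space_N)
  have [measurable_cong]: "sets N = sets borel" by (rule sets_N)
  show ?thesis
    unfolding exit_above_step_def[abs_def] by measurable
qed

lemma nn_integral_exit_above_gain:
  assumes "1 \<le> n" and [measurable]: "g \<in> borel_measurable borel"
  shows "(\<integral>\<^sup>+\<omega>. exit_above_gain b g n (\<lambda>i. Z i \<omega>) \<partial>M) =
    (\<integral>\<^sup>+x. (if within_band b x (n - 1) then exit_above_step N b g (seq_sum x (n - 1)) else 0)
      \<partial>PiM {1..n - 1} (\<lambda>_. N))"
proof -
  interpret N: product_sigma_finite "\<lambda>_. N"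
    using prob_space_N by (simp add: product_sigma_finite_def prob_space_imp_sigma_finite)
  have sets_PiM_N: "sets (PiM I (\<lambda>_. N)) = sets (PiM I (\<lambda>_. borel))" for I :: "nat set"
    by (rule sets_PiM_cong) (auto simp: sets_N)
  have I: "insert n {1..n - 1} = {1..n}"
    using assms(1) by auto
  have meas_insert: "exit_above_gain b g n \<in> borel_measurable (PiM (insert n {1..n - 1}) (\<lambda>_. N))"
    unfolding I measurable_cong_sets[OF sets_PiM_N refl] by measurable
  have "(\<integral>\<^sup>+\<omega>. exit_above_gain b g n (\<lambda>i. Z i \<omega>) \<partial>M)
      = (\<integral>\<^sup>+\<omega>. exit_above_gain b g n (\<lambda>i\<in>{1..n}. Z i \<omega>) \<partial>M)"
    by (simp only: exit_above_gain_restrict)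
  also have "\<dots> = (\<integral>\<^sup>+x. exit_above_gain b g n x
      \<partial>distr M (PiM {1..n} (\<lambda>_. borel)) (\<lambda>\<omega>. \<lambda>i\<in>{1..n}. Z i \<omega>))"
    by (rule nn_integral_distr[symmetric, OF measurable_restrict_Z]) measurable
  also have "\<dots> = (\<integral>\<^sup>+x. exit_above_gain b g n x \<partial>PiM (insert n {1..n - 1}) (\<lambda>_. N))"
    by (simp only: distr_restrict_Z[OF assms(1)] I)
  also have "\<dots> = (\<integral>\<^sup>+x. (\<integral>\<^sup>+y. exit_above_gain b g n (x(n := y)) \<partial>N) \<partial>PiM {1..n - 1} (\<lambda>_. N))"
    by (rule N.product_nn_integral_insert[OF _ _ meas_insert]) auto
  also have "\<dots> = (\<integral>\<^sup>+x. (if within_band b x (n - 1) then exit_above_step N b g (seq_sum x (n - 1))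
      else 0) \<partial>PiM {1..n - 1} (\<lambda>_. N))"
    by (intro nn_integral_cong)
      (auto simp: exit_above_gain_fun_upd[OF assms(1)] exit_above_step_def)
  finally show ?thesis .
qed

lemma nn_integral_exit_above_gain_1:
  assumes "g \<in> borel_measurable borel"
  shows "(\<integral>\<^sup>+\<omega>. exit_above_gain b g 1 (\<lambda>i. Z i \<omega>) \<partial>M) = exit_above_step N b g 0"
  using nn_integral_exit_above_gain[of 1 g b] assms
  by (simp add: PiM_empty nn_integral_count_space_finite within_band_def seq_sum_def)

lemma exit_above_gain_mono:
  assumes "0 \<le> b" and g [measurable]: "g \<in> borel_measurable borel"
    and h [measurable]: "h \<in> borel_measurable borel"
    and step: "\<And>s. s \<in> {- b..b} \<Longrightarrow> c * exit_above_step N b g s \<le> d * exit_above_step N b h s"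
  shows "c * (\<integral>\<^sup>+\<omega>. exit_above_gain b g n (\<lambda>i. Z i \<omega>) \<partial>M)
    \<le> d * (\<integral>\<^sup>+\<omega>. exit_above_gain b h n (\<lambda>i. Z i \<omega>) \<partial>M)"
proof (cases "n = 0")
  case True
  then show ?thesis
    by (simp add: exit_above_gain_def exits_above_at_def)
next
  case False
  then have n: "1 \<le> n" by simp
  let ?P = "PiM {1..n - 1} (\<lambda>_. N)"
  define F where
    "F f x = (if within_band b x (n - 1) then exit_above_step N b f (seq_sum x (n - 1)) else 0)" for f x
  have [measurable_cong]: "sets ?P = sets (PiM {1..n - 1} (\<lambda>_. borel))"
    by (rule sets_PiM_cong) (auto simp: sets_N)
  have [measurable]: "Measurable.pred (PiM {1..n - 1} (\<lambda>_. borel)) (\<lambda>x. within_band b x (n - 1))"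
    by (rule measurable_within_band_PiM) (rule order_refl)
  have [measurable]: "(\<lambda>x. seq_sum x (n - 1)) \<in> borel_measurable (PiM {1..n - 1} (\<lambda>_. borel))"
    by (rule measurable_seq_sum_PiM) (rule order_refl)
  have [measurable]: "F f \<in> borel_measurable ?P" if [measurable]: "f \<in> borel_measurable borel" for f
    unfolding F_def[abs_def] by measurable
  have step_F: "c * F g x \<le> d * F h x" for x
    using step[of "seq_sum x (n - 1)"] abs_seq_sum_le_if_within_band[OF \<open>0 \<le> b\<close>, of x "n - 1"]
    by (auto simp: F_def abs_le_iff)
  have "c * integral\<^sup>N ?P (F g) = (\<integral>\<^sup>+x. c * F g x \<partial>?P)"
    by (rule nn_integral_cmult[symmetric]) measurable
  also have "\<dots> \<le> (\<integral>\<^sup>+x. d * F h x \<partial>?P)"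
    by (rule nn_integral_mono) (rule step_F)
  also have "\<dots> = d * integral\<^sup>N ?P (F h)"
    by (rule nn_integral_cmult) measurable
  finally show ?thesis
    unfolding nn_integral_exit_above_gain[OF n g] nn_integral_exit_above_gain[OF n h] F_def .
qed

lemma sets_exit_above: "{\<omega> \<in> space M. exits Z b \<omega> \<and> b < stopped_sum Z b \<omega>} \<in> sets M"
proof -
  have "{\<omega> \<in> space M. exits Z b \<omega> \<and> b < stopped_sum Z b \<omega>}
      = {\<omega> \<in> space M. \<exists>n. exits_above_at b (\<lambda>i. Z i \<omega>) n}"
    by (auto simp: exits_above_at_iff)
  then show ?thesis
    by simp
qed

lemma nn_integral_exit_above:
  assumes [measurable]: "g \<in> borel_measurable borel"
  shows "(\<integral>\<^sup>+\<omega>. (if exits Z b \<omega> \<and> b < stopped_sum Z b \<omega> then ennreal (g (stopped_sum Z b \<omega>)) else 0)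
      \<partial>M)
    = (\<Sum>n. \<integral>\<^sup>+\<omega>. exit_above_gain b g n (\<lambda>i. Z i \<omega>) \<partial>M)"
  by (simp add: nn_integral_suminf flip: suminf_exit_above_gain)

lemma emeasure_exit_above:
  "emeasure M {\<omega> \<in> space M. exits Z b \<omega> \<and> b < stopped_sum Z b \<omega>}
    = (\<Sum>n. \<integral>\<^sup>+\<omega>. exit_above_gain b (\<lambda>_. 1) n (\<lambda>i. Z i \<omega>) \<partial>M)"
proof -
  have "emeasure M {\<omega> \<in> space M. exits Z b \<omega> \<and> b < stopped_sum Z b \<omega>}
      = (\<integral>\<^sup>+\<omega>. (if exits Z b \<omega> \<and> b < stopped_sum Z b \<omega> then ennreal 1 else 0) \<partial>M)"
    using sets_exit_above[of b] by (auto simp flip: nn_integral_indicator intro!: nn_integral_cong)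
  then show ?thesis
    by (simp only: nn_integral_exit_above[OF borel_measurable_const])
qed

lemma cond_exp_exit_above_eq:
  fixes b :: real
  assumes g [measurable]: "g \<in> borel_measurable borel" and g_nonneg: "\<And>x. 0 \<le> g x"
  defines "A \<equiv> {\<omega> \<in> space M. exits Z b \<omega> \<and> stopped_sum Z b \<omega> > b}"
  shows "cond_exp_event M (\<lambda>\<omega>. g (stopped_sum Z b \<omega>)) A
    = enn2real (\<Sum>n. \<integral>\<^sup>+\<omega>. exit_above_gain b g n (\<lambda>i. Z i \<omega>) \<partial>M)
      / enn2real (\<Sum>n. \<integral>\<^sup>+\<omega>. exit_above_gain b (\<lambda>_. 1) n (\<lambda>i. Z i \<omega>) \<partial>M)"
proof -
  have gain_sum:
    "ennreal (indicator A \<omega> * g (stopped_sum Z b \<omega>)) = (\<Sum>n. exit_above_gain b g n (\<lambda>i. Z i \<omega>))"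
    if "\<omega> \<in> space M" for \<omega>
    using that by (simp add: suminf_exit_above_gain A_def indicator_def)
  have "(\<lambda>\<omega>. indicator A \<omega> * g (stopped_sum Z b \<omega>)) \<in> borel_measurable M"
  proof (rule measurable_cong[THEN iffD1])
    show "(\<lambda>\<omega>. enn2real (\<Sum>n. exit_above_gain b g n (\<lambda>i. Z i \<omega>))) \<in> borel_measurable M"
      by measurable
    show "enn2real (\<Sum>n. exit_above_gain b g n (\<lambda>i. Z i \<omega>)) = indicator A \<omega> * g (stopped_sum Z b \<omega>)"
      if "\<omega> \<in> space M" for \<omega>
      using g_nonneg by (simp flip: gain_sum[OF that])
  qed
  then have "(\<integral>\<omega>. indicator A \<omega> * g (stopped_sum Z b \<omega>) \<partial>M)
      = enn2real (\<Sum>n. \<integral>\<^sup>+\<omega>. exit_above_gain b g n (\<lambda>i. Z i \<omega>) \<partial>M)"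
    using g_nonneg
    by (simp add: integral_eq_nn_integral gain_sum nn_integral_suminf cong: nn_integral_cong)
  then show ?thesis
    by (simp add: cond_exp_event_def measure_def A_def emeasure_exit_above)
qed

theorem cond_exp_exit_above_bounds:
  fixes g :: "real \<Rightarrow> real" and c d b :: real
  assumes "0 \<le> b" and g: "g \<in> borel_measurable borel" "\<And>x. 0 \<le> g x" and "0 \<le> c"
    and lower: "\<And>s. s \<in> {- b..b} \<Longrightarrow>
        ennreal c * exit_above_step N b (\<lambda>_. 1) s \<le> exit_above_step N b g s"
      "ennreal c * exit_above_step N b (\<lambda>_. 1) 0 < exit_above_step N b g 0"
    and upper: "\<And>s. s \<in> {- b..b} \<Longrightarrow>
        exit_above_step N b g s \<le> ennreal d * exit_above_step N b (\<lambda>_. 1) s"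
      "exit_above_step N b g 0 < ennreal d * exit_above_step N b (\<lambda>_. 1) 0"
  defines "A \<equiv> {\<omega> \<in> space M. exits Z b \<omega> \<and> stopped_sum Z b \<omega> > b}"
  shows "c < cond_exp_event M (\<lambda>\<omega>. g (stopped_sum Z b \<omega>)) A
    \<and> cond_exp_event M (\<lambda>\<omega>. g (stopped_sum Z b \<omega>)) A < d"
proof -
  define a where "a n = (\<integral>\<^sup>+\<omega>. exit_above_gain b g n (\<lambda>i. Z i \<omega>) \<partial>M)" for n
  define p where "p n = (\<integral>\<^sup>+\<omega>. exit_above_gain b (\<lambda>_. 1) n (\<lambda>i. Z i \<omega>) \<partial>M)" for n
  have "ennreal c * p n \<le> a n" for n
    using exit_above_gain_mono[where g="\<lambda>_. 1" and h=g and c="ennreal c" and d=1] lower(1) \<open>0 \<le> b\<close> g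
    by (simp add: a_def p_def)
  moreover have "a n \<le> ennreal d * p n" for n
    using exit_above_gain_mono[where g=g and h="\<lambda>_. 1" and c=1 and d="ennreal d"] upper(1) \<open>0 \<le> b\<close> g
    by (simp add: a_def p_def)
  moreover have "ennreal c * p 1 < a 1" and "a 1 < ennreal d * p 1"
    unfolding a_def p_def nn_integral_exit_above_gain_1[OF g(1)]
      nn_integral_exit_above_gain_1[OF borel_measurable_const]
    using lower(2) upper(2) by auto
  moreover have "suminf p < \<infinity>"
    unfolding p_def[abs_def] emeasure_exit_above[symmetric] by (simp add: less_top[symmetric])
  ultimately show ?thesis
    using ennreal_suminf_ratio_bounds[where a=a and p=p and k=1] \<open>0 \<le> c\<close>
    unfolding A_def cond_exp_exit_above_eq[OF g] a_def[abs_def] p_def[abs_def] by blast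
qed

end

section \<open>Overshoot of a normal variable\<close>

lemma normal_density_shift:
  "normal_density m 1 (w + c) = exp (c * m - c\<^sup>2 / 2 - c * w) * normal_density m 1 w"
proof -
  have "(c * m - c\<^sup>2 / 2 - c * w) + (- (w - m)\<^sup>2 / 2) = - (w + c - m)\<^sup>2 / 2"
    by (simp add: power2_eq_square field_simps)
  then show ?thesis
    unfolding normal_density_def by (simp flip: exp_add)
qed

lemma normal_density_tilt: "exp (- 2 * m * x) * normal_density m 1 x = normal_density (- m) 1 x"
proof -
  have "- 2 * m * x + (- (x - m)\<^sup>2 / 2) = - (x - - m)\<^sup>2 / 2"
    by (simp add: power2_eq_square field_simps)
  then show ?thesis
    unfolding normal_density_def by (simp flip: exp_add)
qed

lemma normal_density_tilt_shift:
  "exp (- 2 * m * w) * normal_density m 1 (w + c)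
    = exp (2 * m * c) * normal_density (- m) 1 (w + c)"
proof -
  have "exp (- 2 * m * w) = exp (2 * m * c) * exp (- 2 * m * (w + c))"
    by (simp add: algebra_simps flip: exp_add)
  then show ?thesis
    using normal_density_tilt[of m "w + c"] by (metis mult.assoc)
qed

lemma integral_pos_lborel:
  fixes g :: "real \<Rightarrow> real"
  assumes "integrable lborel g" and "\<And>w. 0 \<le> g w" and "AE w in lborel. 0 < w \<longrightarrow> 0 < g w"
  shows "0 < integral\<^sup>L lborel g"
proof -
  have "integral\<^sup>L lborel g \<noteq> 0"
  proof
    assume "integral\<^sup>L lborel g = 0"
    then have "AE w in lborel. g w = 0"
      using integral_nonneg_eq_0_iff_AE[OF assms(1)] assms(2) by simp
    with assms(3) have "AE w in lborel. w \<notin> {0<..<1::real}"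
      by eventually_elim auto
    then have "emeasure lborel {0<..<1::real} = 0"
      by (subst (asm) AE_iff_measurable[where N="{0<..<1}"]) auto
    then show False by simp
  qed
  moreover have "0 \<le> integral\<^sup>L lborel g"
    using assms(2) by (simp add: integral_nonneg_AE)
  ultimately show ?thesis by simp
qed

text \<open>For \<open>Y \<sim> N(m,1)\<close> this is \<open>P(Y > c)\<close>, written in the overshoot variable \<open>w = Y - c\<close>.\<close>
definition normal_tail :: "real \<Rightarrow> real \<Rightarrow> real" where
  "normal_tail m c = (\<integral>w. indicator {0<..} w * normal_density m 1 (w + c) \<partial>lborel)"

lemma integrable_normal_tail:
  "integrable lborel (\<lambda>w. indicator {0<..} w * normal_density m 1 (w + c))"
proof -
  have "normal_density m 1 (w + c) = normal_density (m - c) 1 w" for w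
    unfolding normal_density_def by (simp add: algebra_simps)
  then show ?thesis
    by (simp add: mult.commute[of "indicator _ _"] integrable_real_mult_indicator)
qed

lemma normal_tail_pos: "0 < normal_tail m c"
  unfolding normal_tail_def
  by (rule integral_pos_lborel) (auto simp: integrable_normal_tail normal_density_pos)

lemma has_bochner_integral_normal_tail:
  "has_bochner_integral lborel (\<lambda>w. indicator {0<..} w * normal_density m 1 (w + c)) (normal_tail m c)"
  unfolding normal_tail_def by (rule has_bochner_integral_integrable[OF integrable_normal_tail])

lemma normal_tail_nonneg: "0 \<le> normal_tail m c"
  using normal_tail_pos[of m c] by simp

lemma Phi_eq_integral: "Phi a = (\<integral>u. indicator {..a} u * normal_density 0 1 u \<partial>lborel)"
proof -
  have "emeasure (density lborel (normal_density 0 1)) {..a}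
      = (\<integral>\<^sup>+ u. ennreal (indicator {..a} u * normal_density 0 1 u) \<partial>lborel)"
    by (subst emeasure_density) (auto intro!: nn_integral_cong simp: indicator_def)
  also have "\<dots> = ennreal (\<integral>u. indicator {..a} u * normal_density 0 1 u \<partial>lborel)"
    by (rule nn_integral_eq_integral)
      (auto simp: mult.commute[of "indicator _ _"] integrable_real_mult_indicator)
  finally show ?thesis
    unfolding Phi_def cdf_def measure_def by (simp add: integral_nonneg_AE)
qed

lemma one_minus_Phi: "1 - Phi a = (\<integral>u. indicator {a<..} u * normal_density 0 1 u \<partial>lborel)"
proof -
  have "Phi a + (\<integral>u. indicator {a<..} u * normal_density 0 1 u \<partial>lborel)
      = (\<integral>u. indicator {..a} u * normal_density 0 1 u + indicator {a<..} u * normal_density 0 1 u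
          \<partial>lborel)"
    unfolding Phi_eq_integral
    by (rule Bochner_Integration.integral_add[symmetric])
      (auto simp: mult.commute[of "indicator _ _"] integrable_real_mult_indicator)
  also have "\<dots> = (\<integral>u. normal_density 0 1 u \<partial>lborel)"
    by (rule Bochner_Integration.integral_cong) (auto simp: indicator_def)
  finally show ?thesis by simp
qed

lemma Phi_minus: "Phi (- a) = 1 - Phi a"
proof -
  have "Phi (- a) = (\<integral>u. indicator {..- a} (- u) * normal_density 0 1 (- u) \<partial>lborel)"
    unfolding Phi_eq_integral using lborel_integral_real_affine[of "-1" _ 0] by simp
  also have "\<dots> = (\<integral>u. indicator {a<..} u * normal_density 0 1 u \<partial>lborel)"
    by (rule integral_cong_AE)
      (auto simp: indicator_def normal_density_def
        intro!: eventually_mono[OF AE_lborel_singleton[of a]])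
  finally show ?thesis by (simp add: one_minus_Phi)
qed

lemma normal_tail_zero: "normal_tail m 0 = 1 - Phi (- m)"
proof -
  have "normal_tail m 0 = (\<integral>u. indicator {0<..} (m + u) * normal_density m 1 (m + u) \<partial>lborel)"
    unfolding normal_tail_def using lborel_integral_real_affine[of 1 _ m] by simp
  also have "\<dots> = (\<integral>u. indicator {- m<..} u * normal_density 0 1 u \<partial>lborel)"
    by (rule Bochner_Integration.integral_cong) (auto simp: indicator_def normal_density_def)
  finally show ?thesis by (simp add: one_minus_Phi)
qed

lemma Rratio_eq_normal_tail: "Rratio (- m) = normal_tail (- m) 0 / normal_tail m 0"
  unfolding Rratio_def normal_tail_zero Phi_minus[of m] by simp

lemma Rratio_pos: "0 < Rratio a"
  using Rratio_eq_normal_tail[of "- a"] normal_tail_pos[of a 0] normal_tail_pos[of "- a" 0] by simp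

text \<open>By tilting, \<open>exp (2 * m * c) * normal_tail (- m) c = E[exp (-2 m (Y - c)); Y > c]\<close>
  for \<open>Y \<sim> N(m,1)\<close>.\<close>
lemma normal_tail_tilt_sign:
  assumes "m \<noteq> 0"
  shows "0 < m * (normal_tail m c - exp (2 * m * c) * normal_tail (- m) c)"
proof -
  define h where
    "h w = indicator {0<..} w * (m * (1 - exp (- 2 * m * w))) * normal_density m 1 (w + c)" for w
  have h_eq: "h = (\<lambda>w. m * (indicator {0<..} w * normal_density m 1 (w + c))
      - m * exp (2 * m * c) * (indicator {0<..} w * normal_density (- m) 1 (w + c)))"
    using normal_density_tilt_shift[of m _ c] by (simp add: fun_eq_iff h_def algebra_simps)
  have "m * (normal_tail m c - exp (2 * m * c) * normal_tail (- m) c) = integral\<^sup>L lborel h"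
    unfolding h_eq normal_tail_def
    by (simp add: integrable_normal_tail Bochner_Integration.integral_diff right_diff_distrib
        mult.assoc)
  also have "0 < integral\<^sup>L lborel h"
  proof (rule integral_pos_lborel)
    have pos: "0 < m * (1 - exp (- 2 * m * w))" if "0 < w" for w
    proof (cases "0 < m")
      case True
      with that show ?thesis by simp
    next
      case False
      with assms have "m < 0" by simp
      with that have "1 < exp (- 2 * m * w)"
        by (simp add: mult_neg_pos)
      with \<open>m < 0\<close> show ?thesis by (simp add: mult_neg_neg)
    qed
    show "0 \<le> h w" for w
      using pos[of w] by (cases "0 < w") (simp_all add: h_def)
    show "AE w in lborel. 0 < w \<longrightarrow> 0 < h w"
      using pos by (auto simp: h_def normal_density_pos)
    show "integrable lborel h"
      unfolding h_eq by (simp add: integrable_normal_tail)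
  qed
  finally show ?thesis .
qed

text \<open>The pivot \<open>w0\<close>, where \<open>f\<close> takes its \<open>p\<close>-weighted mean, replaces the usual double integral.\<close>
lemma chebyshev_integral_strict:
  fixes p f g :: "real \<Rightarrow> real"
  assumes p_int: "has_bochner_integral lborel p P"
    and fp_int: "has_bochner_integral lborel (\<lambda>w. f w * p w) FP"
    and gp_int: "has_bochner_integral lborel (\<lambda>w. g w * p w) GP"
    and fgp_int: "has_bochner_integral lborel (\<lambda>w. f w * g w * p w) FGP"
    and p: "\<And>w. 0 \<le> p w" "\<And>w. 0 < w \<Longrightarrow> 0 < p w"
    and pivot: "f w0 * P = FP"
    and similarly_ordered: "\<And>w. w \<noteq> w0 \<Longrightarrow> 0 < (f w - f w0) * (g w - g w0)"
  shows "FP * GP < FGP * P"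
proof -
  define d where "d w = (f w - f w0) * (g w - g w0) * p w" for w
  have "d = (\<lambda>w. (f w * g w * p w - f w0 * (g w * p w)) - (g w0 * (f w * p w) - f w0 * g w0 * p w))"
    by (auto simp: d_def algebra_simps)
  then have d_int: "has_bochner_integral lborel d ((FGP - f w0 * GP) - (g w0 * FP - f w0 * g w0 * P))"
    by (simp only:) (intro has_bochner_integral_diff has_bochner_integral_mult_right assms)
  have "0 \<le> d w" for w
    using similarly_ordered[of w] p(1)[of w] by (cases "w = w0") (auto simp: d_def)
  moreover have "AE w in lborel. 0 < w \<longrightarrow> 0 < d w"
    using AE_lborel_singleton[of w0] by eventually_elim (auto simp: d_def similarly_ordered p(2))
  ultimately have "0 < FGP - f w0 * GP"
    using integral_pos_lborel[of d] d_int
    by (simp add: has_bochner_integral_iff algebra_simps flip: pivot)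
  moreover have "0 < P"
    using integral_pos_lborel[of p] p_int p by (simp add: has_bochner_integral_iff AE_I2)
  ultimately have "0 < P * (FGP - f w0 * GP)"
    by simp
  then show ?thesis
    by (simp add: algebra_simps flip: pivot)
qed

lemma exp_similarly_ordered:
  fixes m c w v :: real
  assumes "m \<noteq> 0" "0 < c" "w \<noteq> v"
  shows "0 < (m * exp (- 2 * m * w) - m * exp (- 2 * m * v)) * (exp (a - c * w) - exp (a - c * v))"
proof -
  have "0 < m * (exp (- 2 * m * w) - exp (- 2 * m * v)) \<longleftrightarrow> w < v"
    using assms(1) by (cases "0 < m") (auto simp: zero_less_mult_iff mult_less_cancel_left)
  moreover have "m * (exp (- 2 * m * w) - exp (- 2 * m * v)) < 0 \<longleftrightarrow> v < w"
    using assms(1) by (cases "0 < m") (auto simp: mult_less_0_iff mult_less_cancel_left)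
  moreover have "0 < exp (a - c * w) - exp (a - c * v) \<longleftrightarrow> w < v"
    using assms(2) by simp
  moreover have "exp (a - c * w) - exp (a - c * v) < 0 \<longleftrightarrow> v < w"
    using assms(2) by simp
  ultimately show ?thesis
    using assms(3) by (cases "w < v") (auto simp: zero_less_mult_iff right_diff_distrib)
qed

lemma normal_tail_tilt_ratio_sign:
  assumes "m \<noteq> 0" and "0 < c"
  shows "0 < m * (exp (2 * m * c) * normal_tail (- m) c * normal_tail m 0
                  - normal_tail (- m) 0 * normal_tail m c)"
proof -
  define p where "p w = indicator {0<..} w * normal_density m 1 w" for w
  define f where "f w = m * exp (- 2 * m * w)" for w
  define g where "g w = exp (c * m - c\<^sup>2 / 2 - c * w)" for w
  have fp_eq: "(\<lambda>w. f w * p w) = (\<lambda>w. m * (indicator {0<..} w * normal_density (- m) 1 (w + 0)))"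
    using normal_density_tilt[of m] by (simp add: fun_eq_iff f_def p_def algebra_simps)
  have gp_eq: "(\<lambda>w. g w * p w) = (\<lambda>w. indicator {0<..} w * normal_density m 1 (w + c))"
    by (simp add: fun_eq_iff g_def p_def normal_density_shift)
  have fgp_eq: "(\<lambda>w. f w * g w * p w)
      = (\<lambda>w. m * exp (2 * m * c) * (indicator {0<..} w * normal_density (- m) 1 (w + c)))"
  proof
    fix w
    have "f w * g w * p w
        = m * (indicator {0<..} w * (exp (- 2 * m * w) * normal_density m 1 (w + c)))"
      using fun_cong[OF gp_eq, of w] by (simp add: f_def mult_ac)
    then show "f w * g w * p w
        = m * exp (2 * m * c) * (indicator {0<..} w * normal_density (- m) 1 (w + c))"
      unfolding normal_density_tilt_shift by (simp add: mult_ac)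
  qed
  have int_p: "has_bochner_integral lborel p (normal_tail m 0)"
    using has_bochner_integral_normal_tail[of m 0] by (simp add: p_def[abs_def])
  have int_fp: "has_bochner_integral lborel (\<lambda>w. f w * p w) (m * normal_tail (- m) 0)"
    and int_gp: "has_bochner_integral lborel (\<lambda>w. g w * p w) (normal_tail m c)"
    and int_fgp:
      "has_bochner_integral lborel (\<lambda>w. f w * g w * p w) (m * exp (2 * m * c) * normal_tail (- m) c)"
    unfolding fp_eq gp_eq fgp_eq
    by (intro has_bochner_integral_mult_right has_bochner_integral_normal_tail)+
  define w0 where "w0 = - ln (normal_tail (- m) 0 / normal_tail m 0) / (2 * m)"
  have "f w0 = m * (normal_tail (- m) 0 / normal_tail m 0)"
    using assms(1) normal_tail_pos[of "- m" 0] normal_tail_pos[of m 0] by (simp add: f_def w0_def)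
  then have pivot: "f w0 * normal_tail m 0 = m * normal_tail (- m) 0"
    using normal_tail_pos[of m 0] by simp
  have similarly_ordered: "w \<noteq> w0 \<Longrightarrow> 0 < (f w - f w0) * (g w - g w0)" for w
    unfolding f_def g_def using assms by (rule exp_similarly_ordered)
  have "m * normal_tail (- m) 0 * normal_tail m c
      < m * exp (2 * m * c) * normal_tail (- m) c * normal_tail m 0"
    by (rule chebyshev_integral_strict[OF int_p int_fp int_gp int_fgp _ _ pivot similarly_ordered])
      (simp_all add: p_def normal_density_pos)
  then show ?thesis
    by (simp add: algebra_simps)
qed

lemma normal_exit_step_tilt_sign:
  assumes "m \<noteq> 0"
  shows "0 < m * (exp (- 2 * m * b) * normal_tail m (b - s)
                  - exp (- 2 * m * s) * normal_tail (- m) (b - s))"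
proof -
  have "exp (- 2 * m * s) = exp (- 2 * m * b) * exp (2 * m * (b - s))"
    by (simp add: algebra_simps flip: exp_add)
  then have "m * (exp (- 2 * m * b) * normal_tail m (b - s) - exp (- 2 * m * s) * normal_tail (- m) (b - s))
      = exp (- 2 * m * b) * (m * (normal_tail m (b - s) - exp (2 * m * (b - s)) * normal_tail (- m) (b - s)))"
    by (simp add: algebra_simps)
  also have "0 < \<dots>"
    using normal_tail_tilt_sign[OF assms] by simp
  finally show ?thesis .
qed

lemma normal_exit_step_ratio_sign:
  assumes "m \<noteq> 0" and "s \<le> b"
  shows "0 \<le> m * (exp (- 2 * m * s) * normal_tail (- m) (b - s)
                  - Rratio (- m) * exp (- 2 * m * b) * normal_tail m (b - s))"
    and "s < b \<Longrightarrow> 0 < m * (exp (- 2 * m * s) * normal_tail (- m) (b - s)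
                  - Rratio (- m) * exp (- 2 * m * b) * normal_tail m (b - s))"
proof -
  define c where "c = b - s"
  have "exp (- 2 * m * s) = exp (- 2 * m * b) * exp (2 * m * c)"
    by (simp add: c_def algebra_simps flip: exp_add)
  then have ratio: "m * (exp (- 2 * m * s) * normal_tail (- m) c
                    - Rratio (- m) * exp (- 2 * m * b) * normal_tail m c)
      = exp (- 2 * m * b) / normal_tail m 0
        * (m * (exp (2 * m * c) * normal_tail (- m) c * normal_tail m 0
                - normal_tail (- m) 0 * normal_tail m c))"
    unfolding Rratio_eq_normal_tail using normal_tail_pos[of m 0] by (simp add: field_simps)
  have strict: "0 < m * (exp (- 2 * m * s) * normal_tail (- m) c
      - Rratio (- m) * exp (- 2 * m * b) * normal_tail m c)" if "0 < c"
    unfolding ratio using normal_tail_tilt_ratio_sign[OF assms(1) that] normal_tail_pos[of m 0]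
    by (metis divide_pos_pos exp_gt_zero mult_pos_pos)
  show "s < b \<Longrightarrow> 0 < m * (exp (- 2 * m * s) * normal_tail (- m) (b - s)
                  - Rratio (- m) * exp (- 2 * m * b) * normal_tail m (b - s))"
    using strict by (simp add: c_def)
  show "0 \<le> m * (exp (- 2 * m * s) * normal_tail (- m) (b - s)
                  - Rratio (- m) * exp (- 2 * m * b) * normal_tail m (b - s))"
  proof (cases "s = b")
    case True
    then show ?thesis
      using normal_tail_pos[of m 0] by (simp add: Rratio_eq_normal_tail)
  next
    case False
    with assms(2) strict show ?thesis
      by (simp add: c_def less_imp_le)
  qed
qed

lemma exit_above_step_normal:
  "exit_above_step (density lborel (normal_density m 1)) b (\<lambda>_. 1) s
    = ennreal (normal_tail m (b - s))"
proof -
  have "exit_above_step (density lborel (normal_density m 1)) b (\<lambda>_. 1) s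
      = (\<integral>\<^sup>+y. ennreal (indicator {b - s<..} y * normal_density m 1 y) \<partial>lborel)"
    unfolding exit_above_step_def
    by (subst nn_integral_density) (auto intro!: nn_integral_cong simp: indicator_def)
  also have "\<dots> = (\<integral>\<^sup>+w. ennreal (indicator {0<..} w * normal_density m 1 (w + (b - s))) \<partial>lborel)"
    using nn_integral_real_affine[of "\<lambda>y. ennreal (indicator {b - s<..} y * normal_density m 1 y)"
        1 "b - s"]
    by (simp add: indicator_def add.commute)
  also have "\<dots> = ennreal (normal_tail m (b - s))"
    unfolding normal_tail_def by (rule nn_integral_eq_integral) (auto simp: integrable_normal_tail)
  finally show ?thesis .
qed

lemma exit_above_step_normal_tilted:
  "exit_above_step (density lborel (normal_density m 1)) b (\<lambda>x. exp (- 2 * m * x)) s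
    = ennreal (exp (- 2 * m * s) * normal_tail (- m) (b - s))"
proof -
  have tilt: "ennreal (normal_density m 1 y) * ennreal (exp (- 2 * m * (s + y)))
      = ennreal (exp (- 2 * m * s)) * ennreal (normal_density (- m) 1 y)" for y
  proof -
    have "exp (- 2 * m * (s + y)) = exp (- 2 * m * s) * exp (- 2 * m * y)"
      by (simp add: algebra_simps flip: exp_add)
    then have "exp (- 2 * m * (s + y)) * normal_density m 1 y
        = exp (- 2 * m * s) * normal_density (- m) 1 y"
      using normal_density_tilt[of m y] by (metis mult.assoc)
    then show ?thesis
      by (metis ennreal_mult exp_ge_zero normal_density_nonneg mult.commute)
  qed
  have "exit_above_step (density lborel (normal_density m 1)) b (\<lambda>x. exp (- 2 * m * x)) s
      = (\<integral>\<^sup>+y. ennreal (exp (- 2 * m * s)) * (indicator {b<..} (s + y) * ennreal 1)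
          \<partial>density lborel (normal_density (- m) 1))"
    unfolding exit_above_step_def using tilt
    by (subst (1 2) nn_integral_density) (auto intro!: nn_integral_cong simp: indicator_def mult_ac)
  also have "\<dots> = ennreal (exp (- 2 * m * s))
      * exit_above_step (density lborel (normal_density (- m) 1)) b (\<lambda>_. 1) s"
    unfolding exit_above_step_def by (rule nn_integral_cmult) simp
  finally show ?thesis
    by (simp add: exit_above_step_normal ennreal_mult')
qed

section \<open>Exit of the Gaussian random walk\<close>

context iid_sequence
begin

corollary cond_exp_exit_above_normal_pos:
  assumes N: "N = density lborel (normal_density m 1)" and "0 < m" and "0 < b"
  defines "A \<equiv> {\<omega> \<in> space M. exits Z b \<omega> \<and> stopped_sum Z b \<omega> > b}"
    and "X \<equiv> \<lambda>\<omega>. exp (- 2 * m * stopped_sum Z b \<omega>)"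
  shows "Rratio (- m) * exp (- 2 * m * b) < cond_exp_event M X A
    \<and> cond_exp_event M X A < exp (- 2 * m * b)"
  unfolding A_def X_def
proof (rule cond_exp_exit_above_bounds)
  let ?P = "\<lambda>s. normal_tail m (b - s)" and ?A = "\<lambda>s. exp (- 2 * m * s) * normal_tail (- m) (b - s)"
  have J: "exit_above_step N b (\<lambda>_. 1) s = ennreal (?P s)"
    "exit_above_step N b (\<lambda>x. exp (- 2 * m * x)) s = ennreal (?A s)" for s
    unfolding N by (rule exit_above_step_normal exit_above_step_normal_tilted)+
  show R: "0 \<le> Rratio (- m) * exp (- 2 * m * b)"
    using Rratio_pos[of "- m"] by simp
  have lower: "Rratio (- m) * exp (- 2 * m * b) * ?P s \<le> ?A s"
    and lower_strict: "s < b \<Longrightarrow> Rratio (- m) * exp (- 2 * m * b) * ?P s < ?A s" if "s \<le> b" for s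
    using normal_exit_step_ratio_sign[OF _ that, of m] \<open>0 < m\<close>
    by (simp_all add: zero_le_mult_iff zero_less_mult_iff)
  then show "ennreal (Rratio (- m) * exp (- 2 * m * b)) * exit_above_step N b (\<lambda>_. 1) s
      \<le> exit_above_step N b (\<lambda>x. exp (- 2 * m * x)) s" if "s \<in> {- b..b}" for s
    using that R unfolding J by (simp add: normal_tail_nonneg flip: ennreal_mult')
  show "ennreal (Rratio (- m) * exp (- 2 * m * b)) * exit_above_step N b (\<lambda>_. 1) 0
      < exit_above_step N b (\<lambda>x. exp (- 2 * m * x)) 0"
    using R lower_strict[of 0] \<open>0 < b\<close> unfolding J
    by (simp add: ennreal_less_iff normal_tail_nonneg flip: ennreal_mult')
  have upper: "?A s < exp (- 2 * m * b) * ?P s" for s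
    using normal_exit_step_tilt_sign[of m b s] \<open>0 < m\<close> by (simp add: zero_less_mult_iff)
  then show "exit_above_step N b (\<lambda>x. exp (- 2 * m * x)) s
      \<le> ennreal (exp (- 2 * m * b)) * exit_above_step N b (\<lambda>_. 1) s" if "s \<in> {- b..b}" for s
    using that unfolding J by (simp add: normal_tail_nonneg less_imp_le flip: ennreal_mult')
  show "exit_above_step N b (\<lambda>x. exp (- 2 * m * x)) 0
      < ennreal (exp (- 2 * m * b)) * exit_above_step N b (\<lambda>_. 1) 0"
    using upper[of 0] \<open>0 < b\<close> unfolding J
    by (simp add: ennreal_less_iff normal_tail_nonneg flip: ennreal_mult')
qed (use \<open>0 < b\<close> in auto)

corollary cond_exp_exit_above_normal_neg:
  assumes N: "N = density lborel (normal_density m 1)" and "m < 0" and "0 < b"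
  defines "A \<equiv> {\<omega> \<in> space M. exits Z b \<omega> \<and> stopped_sum Z b \<omega> > b}"
    and "X \<equiv> \<lambda>\<omega>. exp (- 2 * m * stopped_sum Z b \<omega>)"
  shows "exp (- 2 * m * b) < cond_exp_event M X A
    \<and> cond_exp_event M X A < exp (- 2 * m * b) * Rratio (- m)"
  unfolding A_def X_def
proof (rule cond_exp_exit_above_bounds)
  let ?P = "\<lambda>s. normal_tail m (b - s)" and ?A = "\<lambda>s. exp (- 2 * m * s) * normal_tail (- m) (b - s)"
  have J: "exit_above_step N b (\<lambda>_. 1) s = ennreal (?P s)"
    "exit_above_step N b (\<lambda>x. exp (- 2 * m * x)) s = ennreal (?A s)" for s
    unfolding N by (rule exit_above_step_normal exit_above_step_normal_tilted)+
  have R: "0 \<le> exp (- 2 * m * b) * Rratio (- m)"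
    using Rratio_pos[of "- m"] by simp
  have lower: "exp (- 2 * m * b) * ?P s < ?A s" for s
    using normal_exit_step_tilt_sign[of m b s] \<open>m < 0\<close> by (simp add: zero_less_mult_iff)
  then show "ennreal (exp (- 2 * m * b)) * exit_above_step N b (\<lambda>_. 1) s
      \<le> exit_above_step N b (\<lambda>x. exp (- 2 * m * x)) s" if "s \<in> {- b..b}" for s
    using that unfolding J by (simp add: normal_tail_nonneg less_imp_le flip: ennreal_mult')
  show "ennreal (exp (- 2 * m * b)) * exit_above_step N b (\<lambda>_. 1) 0
      < exit_above_step N b (\<lambda>x. exp (- 2 * m * x)) 0"
    using lower[of 0] \<open>0 < b\<close> unfolding J
    by (simp add: ennreal_less_iff normal_tail_nonneg flip: ennreal_mult')
  have upper: "?A s \<le> exp (- 2 * m * b) * Rratio (- m) * ?P s"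
    and upper_strict: "s < b \<Longrightarrow> ?A s < exp (- 2 * m * b) * Rratio (- m) * ?P s" if "s \<le> b" for s
    using normal_exit_step_ratio_sign[OF _ that, of m] \<open>m < 0\<close>
    by (simp_all add: mult_le_0_iff mult_less_0_iff zero_le_mult_iff zero_less_mult_iff mult_ac)
  then show "exit_above_step N b (\<lambda>x. exp (- 2 * m * x)) s
      \<le> ennreal (exp (- 2 * m * b) * Rratio (- m)) * exit_above_step N b (\<lambda>_. 1) s"
    if "s \<in> {- b..b}" for s
    using that R unfolding J by (simp add: normal_tail_nonneg flip: ennreal_mult')
  show "exit_above_step N b (\<lambda>x. exp (- 2 * m * x)) 0
      < ennreal (exp (- 2 * m * b) * Rratio (- m)) * exit_above_step N b (\<lambda>_. 1) 0"
    using R upper_strict[of 0] \<open>0 < b\<close> unfolding J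
    by (simp add: ennreal_less_iff normal_tail_nonneg flip: ennreal_mult')
qed (use \<open>0 < b\<close> in auto)
end

lemma iid_sequence_normal:
  assumes "prob_space M" and "prob_space.indep_vars M (\<lambda>_. borel) Z {1..}"
    and "\<And>i. i \<ge> 1 \<Longrightarrow> distributed M lborel (Z i) (normal_density m 1)"
  shows "iid_sequence M Z (density lborel (normal_density m 1))"
proof -
  interpret prob_space M by fact
  show ?thesis
  proof
    show "indep_vars (\<lambda>_. borel) Z {1..}" by fact
    show "distr M borel (Z i) = density lborel (normal_density m 1)" if "1 \<le> i" for i
      using assms(3)[OF that] unfolding distributed_def
      by (metis distr_cong sets_lborel)
  qed
qed

lemma iid_sequence_normal_uminus:
  assumes "prob_space M" and "prob_space.indep_vars M (\<lambda>_. borel) Z {1..}"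
    and "\<And>i. i \<ge> 1 \<Longrightarrow> distributed M lborel (Z i) (normal_density m 1)"
  shows "iid_sequence M (\<lambda>i \<omega>. - Z i \<omega>) (density lborel (normal_density (- m) 1))"
proof (rule iid_sequence_normal[OF assms(1)])
  interpret prob_space M by fact
  show "indep_vars (\<lambda>_. borel) (\<lambda>i \<omega>. - Z i \<omega>) {1..}"
    using assms(2) by (rule indep_vars_compose2[where Y="\<lambda>_. uminus"]) simp
  show "distributed M lborel (\<lambda>\<omega>. - Z i \<omega>) (normal_density (- m) 1)" if "i \<ge> 1" for i
    using normal_density_affine[OF assms(3)[OF that], of "- 1" 0] by simp
qed

theorem lemma5:
  fixes M :: "'a measure" and Z :: "nat \<Rightarrow> 'a \<Rightarrow> real" and \<mu> b :: real
  assumes "prob_space M"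
    and "\<mu> > 0" and "b > 0"
    and "prob_space.indep_vars M (\<lambda>_. borel) Z {1..}"
    and "\<And>i. i \<ge> 1 \<Longrightarrow> distributed M lborel (Z i) (normal_density \<mu> 1)"
  defines "Aup \<equiv> {\<omega> \<in> space M. exits Z b \<omega> \<and> stopped_sum Z b \<omega> > b}"
    and "Alow \<equiv> {\<omega> \<in> space M. exits Z b \<omega> \<and> stopped_sum Z b \<omega> < - b}"
    and "X \<equiv> (\<lambda>\<omega>. exp (- 2 * \<mu> * stopped_sum Z b \<omega>))"
  shows "Rratio (- \<mu>) * exp (- 2 * \<mu> * b) < cond_exp_event M X Aup
         \<and> cond_exp_event M X Aup < exp (- 2 * \<mu> * b)
         \<and> exp (2 * \<mu> * b) < cond_exp_event M X Alow
         \<and> cond_exp_event M X Alow < exp (2 * \<mu> * b) * Rratio \<mu>"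
proof -
  have "Rratio (- \<mu>) * exp (- 2 * \<mu> * b) < cond_exp_event M X Aup
      \<and> cond_exp_event M X Aup < exp (- 2 * \<mu> * b)"
    using iid_sequence.cond_exp_exit_above_normal_pos[OF iid_sequence_normal[OF assms(1,4,5)] refl
        assms(2,3)]
    by (simp add: Aup_def X_def)
  moreover have
    "Alow = {\<omega> \<in> space M. exits (\<lambda>i \<omega>. - Z i \<omega>) b \<omega> \<and> stopped_sum (\<lambda>i \<omega>. - Z i \<omega>) b \<omega> > b}"
    and "X = (\<lambda>\<omega>. exp (- 2 * (- \<mu>) * stopped_sum (\<lambda>i \<omega>. - Z i \<omega>) b \<omega>))"
    by (auto simp: Alow_def X_def exits_uminus stopped_sum_uminus)
  then have "exp (2 * \<mu> * b) < cond_exp_event M X Alow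
      \<and> cond_exp_event M X Alow < exp (2 * \<mu> * b) * Rratio \<mu>"
    using iid_sequence.cond_exp_exit_above_normal_neg[OF iid_sequence_normal_uminus[OF assms(1,4,5)]
        refl, of b] assms(2,3)
    by simp
  ultimately show ?thesis
    by blast
qed

end
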